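(* Consider an asymptotically polytropic equation of state whose asymptotic index at low pressure satisfies $0\le n_0\le 3$ (i.e. $\rho(p)=K p^{n_0/(n_0+1)}(1+O(p^{a_0/(n_0+1)}))$ as $p\to0$). Then every perfect fluid solution with positive mass, regular or not, has finite radius and finite total mass: there is $R<\infty$ with $p(r)>0$ for $r<R$ and $p(r)\to0$ as $r\to R$, and $M=\lim_{r\to R}m(r)<\infty$.
   Context: Equation of state: a barotropic relation $\rho=\rho(p)$, defined for $p\ge 0$, with $\rho>0$ for $p>0$, such that $\eta(p)=\int_0^p dp'/\rho(p')$ is finite for $p>0$; $\rho,p$ are regarded as functions of $\eta$. Index function: $n(\eta)=\frac{\eta}{\rho}\frac{d\rho}{d\eta}$. Asymptotically polytropic: $n$ is $C^1$ on $(0,\infty)$, bounded and non-negative on $[0,\infty]$, and $n(\eta)-n_0=O(\eta^{a_0})$ as $\eta\to0$, $n(\eta)-n_1=O(\eta^{-a_1})$ as $\eta\to\infty$ for some $n_0,n_1\ge0$, $a_0,a_1>0$. Perfect fluid solution: a solution $(m(r),p(r))$, $p>0$, of the Newtonian static spherically symmetric equations $dm/dr=4\pi r^2\rho(p)$, $dp/dr=-m\rho(p)/r^2$ (gravitational constant $1$), continued outward in $r$ as long as $p>0$. It is regular if $m(r)\to0$ and $p(r)\to p_c\in(0,\infty)$ as $r\to0$. "Any perfect fluid solution" here includes non-regular ones such as those with a point-mass singularity at $r=0$ and those that started with negative mass and reached $m=0$ at some radius, considered in the region where $m>0$. *)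

theory Defs
  imports "HOL-Analysis.Analysis" "HOL-Library.Landau_Symbols"
begin

definition eos_eta :: "(real \<Rightarrow> real) \<Rightarrow> real \<Rightarrow> real" where
  "eos_eta rho p = (LBINT q:{0<..p}. 1 / rho q)"

definition barotropic_eos :: "(real \<Rightarrow> real) \<Rightarrow> bool" where
  "barotropic_eos rho \<longleftrightarrow>
     (\<forall>p>0. rho p > 0) \<and>
     (\<forall>p>0. set_integrable lborel {0<..p} (\<lambda>q. 1 / rho q))"

text \<open>The pressure as a function of eta (eta is strictly increasing in p), and rho as a
  function of eta.\<close>

definition p_of_eta :: "(real \<Rightarrow> real) \<Rightarrow> real \<Rightarrow> real" where
  "p_of_eta rho e = (THE p. 0 \<le> p \<and> eos_eta rho p = e)"

definition rho_of_eta :: "(real \<Rightarrow> real) \<Rightarrow> real \<Rightarrow> real" where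
  "rho_of_eta rho e = rho (p_of_eta rho e)"

definition index_fun :: "(real \<Rightarrow> real) \<Rightarrow> real \<Rightarrow> real" where
  "index_fun rho e = e / rho_of_eta rho e * deriv (rho_of_eta rho) e"

definition asympt_polytropic ::
  "(real \<Rightarrow> real) \<Rightarrow> real \<Rightarrow> real \<Rightarrow> real \<Rightarrow> real \<Rightarrow> bool" where
  "asympt_polytropic rho n0 n1 a0 a1 \<longleftrightarrow>
     barotropic_eos rho \<and>
     (\<forall>e>0. \<exists>p>0. eos_eta rho p = e) \<and>
     (\<forall>e>0. rho_of_eta rho differentiable (at e)) \<and>
     index_fun rho C1_differentiable_on {0<..} \<and>
     bounded (index_fun rho ` {0<..}) \<and>
     (\<forall>e>0. index_fun rho e \<ge> 0) \<and>
     n0 \<ge> 0 \<and> n1 \<ge> 0 \<and> a0 > 0 \<and> a1 > 0 \<and>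
     (\<lambda>e. index_fun rho e - n0) \<in> O[at_right 0](\<lambda>e. e powr a0) \<and>
     (\<lambda>e. index_fun rho e - n1) \<in> O[at_top](\<lambda>e. e powr (- a1))"

definition fluid_solution ::
  "(real \<Rightarrow> real) \<Rightarrow> (real \<Rightarrow> real) \<Rightarrow> (real \<Rightarrow> real) \<Rightarrow> real set \<Rightarrow> bool" where
  "fluid_solution rho m P I \<longleftrightarrow>
     (\<forall>r\<in>I. r > 0 \<and> P r > 0 \<and>
        (m has_real_derivative 4 * pi * r\<^sup>2 * rho (P r)) (at r) \<and>
        (P has_real_derivative - (m r * rho (P r) / r\<^sup>2)) (at r))"

definition maximal_fluid_solution ::
  "(real \<Rightarrow> real) \<Rightarrow> (real \<Rightarrow> real) \<Rightarrow> (real \<Rightarrow> real) \<Rightarrow> real \<Rightarrow> ereal \<Rightarrow> bool" where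
  "maximal_fluid_solution rho m P r0 R \<longleftrightarrow>
     0 \<le> r0 \<and> ereal r0 < R \<and>
     fluid_solution rho m P {r. r0 < r \<and> ereal r < R} \<and>
     \<not> (\<exists>m' P' R'. R' > R \<and> fluid_solution rho m' P' {r. r0 < r \<and> ereal r < R'} \<and>
          (\<forall>r. r0 < r \<and> ereal r < R \<longrightarrow> m' r = m r \<and> P' r = P r))"

end

theory Submission
  imports Defs
begin

(* Write eta(r) = eta(P r) for the enthalpy along a solution. The field equations give
   eta' = -m/r^2 and m' = 4 pi r^2 rho_of_eta(eta), with m increasing and positive.

   Infinite radius is impossible: eta gets arbitrarily small (otherwise the density is bounded
   below, m grows like r^3 and eta' <= -c r drives eta negative), and eta(r) >= m(r)/r because
   eta(s) - m(r)/s is nonincreasing for s >= r. For n0 <= 3 the low-pressure asymptotics give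
   rho_of_eta(eta) >= c eta^3 >= c (m/r)^3 for large r, so (1/m^2)' <= -8 pi c / r and
   1/m^2 + 8 pi c ln r is nonincreasing, which contradicts 1/m^2 > 0.

   At a finite radius R the mass is increasing and bounded and the pressure is decreasing, so
   both have limits. If the limiting pressure were positive, the Picard-Lindeloef theorem would
   continue the solution beyond R, contradicting maximality. *)

section \<open>Local existence for ordinary differential equations\<close>

lemma bcontfun_clamp:
  fixes g :: "real \<Rightarrow> 'a::metric_space"
  assumes "continuous_on {a..b} g" "a \<le> b"
  shows "(\<lambda>t. g (max a (min b t))) \<in> bcontfun"
proof -
  have "continuous_on UNIV (\<lambda>t. g (max a (min b t)))"
    by (rule continuous_on_compose2[OF assms(1)]) (use assms(2) in \<open>auto intro!: continuous_intros\<close>)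
  moreover have "bounded (range (\<lambda>t. g (max a (min b t))))"
    by (rule bounded_subset[OF compact_imp_bounded[OF compact_continuous_image[OF assms(1)]]])
      (use assms(2) in auto)
  ultimately show ?thesis unfolding bcontfun_def by simp
qed

lemma norm_integral_diff_le:
  fixes f g :: "real \<Rightarrow> 'a::banach"
  assumes "continuous_on {a..b} f" "continuous_on {a..b} g" "a \<le> b"
    and "\<And>s. s \<in> {a..b} \<Longrightarrow> norm (f s - g s) \<le> D"
  shows "norm (integral {a..b} f - integral {a..b} g) \<le> D * (b - a)"
proof -
  have "integral {a..b} f - integral {a..b} g = integral {a..b} (\<lambda>s. f s - g s)"
    using assms by (simp add: integral_diff integrable_continuous_real)
  also have "norm \<dots> \<le> D * (b - a)"
    using assms by (intro integral_bound continuous_intros) auto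
  finally show ?thesis .
qed

lemma picard_global_lipschitz:
  fixes F :: "real \<Rightarrow> 'a::banach \<Rightarrow> 'a"
  assumes "0 \<le> K" "h * K < 1"
    and cont: "continuous_on ({a..a+h} \<times> UNIV) (\<lambda>(t, x). F t x)"
    and lip: "\<And>t x y. t \<in> {a..a+h} \<Longrightarrow> norm (F t x - F t y) \<le> K * norm (x - y)"
  obtains u where "continuous_on {a..a+h} u"
    and "\<And>t. t \<in> {a..a+h} \<Longrightarrow> u t = x0 + integral {a..t} (\<lambda>s. F s (u s))"
proof (cases "h < 0")
  case True
  then show ?thesis using that[of "\<lambda>_. x0"] by simp
next
  case False
  \<comment> \<open>Functions on [a, a+h] are handled as bounded continuous functions on the real line,
    constant outside [a, a+h].\<close>
  define c where "c t = max a (min (a + h) t)" for t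
  have c_in: "c t \<in> {a..a+h}" for t using False by (auto simp: c_def)
  have c_id: "t \<in> {a..a+h} \<Longrightarrow> c t = t" for t by (auto simp: c_def)
  have cont_F: "continuous_on {a..a+h} (\<lambda>s. F s (u s))" if "continuous_on {a..a+h} u" for u
    by (rule continuous_on_compose2[OF cont, of _ "\<lambda>s. (s, u s)", simplified])
      (auto intro!: continuous_intros that)
  define I where "I u t = x0 + integral {a..c t} (\<lambda>s. F s (apply_bcontfun u s))" for u t
  have I_bcontfun: "I u \<in> bcontfun" for u
    unfolding I_def c_def using False
    by (intro bcontfun_clamp continuous_intros indefinite_integral_continuous_1
        integrable_continuous_real cont_F) auto
  define T where "T u = Bcontfun (I u)" for u
  have T: "apply_bcontfun (T u) = I u" for u
    unfolding T_def using I_bcontfun by (simp add: Bcontfun_inverse)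
  have "dist (T u) (T v) \<le> (h * K) * dist u v" for u v
  proof (rule dist_bound)
    fix t
    have sub: "{a..c t} \<subseteq> {a..a+h}" using c_in[of t] by auto
    have "norm (F s (u s) - F s (v s)) \<le> K * dist u v" if "s \<in> {a..c t}" for s
      using lip[of s "u s" "v s"] dist_bounded[of u s v] mult_left_mono[OF _ \<open>0 \<le> K\<close>] that sub
      by (fastforce simp: dist_norm)
    then have "dist (T u t) (T v t) \<le> (K * dist u v) * (c t - a)"
      unfolding T I_def dist_norm add_diff_cancel_left using c_in[of t]
      by (intro norm_integral_diff_le continuous_on_subset[OF cont_F sub]) auto
    also have "\<dots> \<le> (K * dist u v) * h"
      using c_in[of t] \<open>0 \<le> K\<close> by (intro mult_left_mono) auto
    finally show "dist (T u t) (T v t) \<le> (h * K) * dist u v" by (simp add: algebra_simps)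
  qed
  moreover have "0 \<le> h * K" using False \<open>0 \<le> K\<close> by simp
  ultimately obtain u where "T u = u"
    using banach_fix_type[of "h * K" T] \<open>h * K < 1\<close> by blast
  then have fixed: "u t = x0 + integral {a..c t} (\<lambda>s. F s (u s))" for t
    using T unfolding I_def by metis
  show ?thesis
  proof (rule that)
    fix t assume "t \<in> {a..a+h}"
    show "u t = x0 + integral {a..t} (\<lambda>s. F s (u s))"
      using fixed[of t] unfolding c_id[OF \<open>t \<in> {a..a+h}\<close>] .
  qed simp
qed

lemma continuous_on_compose_clamp:
  fixes F :: "'t::topological_space \<Rightarrow> 'a::euclidean_space \<Rightarrow> 'b::topological_space"
  assumes "continuous_on (S \<times> cbox lo hi) (\<lambda>(t, x). F t x)"
    and "\<And>i. i \<in> Basis \<Longrightarrow> lo \<bullet> i \<le> hi \<bullet> i"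
  shows "continuous_on (S \<times> UNIV) (\<lambda>(t, x). F t (clamp lo hi x))"
proof -
  have clamp_cont: "continuous_on T (clamp lo hi)" for T
    using clamp_continuous_on[of lo hi id] by simp
  have "continuous_on (S \<times> UNIV) (\<lambda>p. F (fst p) (clamp lo hi (snd p)))"
    by (rule continuous_on_compose2[OF assms(1), of _ "\<lambda>p. (fst p, clamp lo hi (snd p))", simplified])
      (auto intro!: continuous_intros continuous_on_compose2[OF clamp_cont] clamp_in_interval assms(2))
  then show ?thesis by (simp add: case_prod_beta')
qed

text \<open>Clamping the state into the box makes F globally Lipschitz; the a priori bound
  |u t - x0| \<le> h B keeps the solution where the clamp is the identity.\<close>

lemma picard_lindeloef_local:
  fixes F :: "real \<Rightarrow> 'a::euclidean_space \<Rightarrow> 'a"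
  assumes "0 \<le> h" "0 \<le> B" "0 \<le> K" "h * K < 1"
    and box: "cball x0 (h * B) \<subseteq> cbox lo hi"
    and cont: "continuous_on ({a..a+h} \<times> cbox lo hi) (\<lambda>(t, x). F t x)"
    and bnd: "\<And>t x. t \<in> {a..a+h} \<Longrightarrow> x \<in> cbox lo hi \<Longrightarrow> norm (F t x) \<le> B"
    and lip: "\<And>t x y. t \<in> {a..a+h} \<Longrightarrow> x \<in> cbox lo hi \<Longrightarrow> y \<in> cbox lo hi \<Longrightarrow>
      norm (F t x - F t y) \<le> K * norm (x - y)"
  obtains u where "u a = x0" "continuous_on {a..a+h} u"
    and "\<And>t. t \<in> {a..a+h} \<Longrightarrow> u t \<in> cball x0 (h * B)"
    and "\<And>t. t \<in> {a..a+h} \<Longrightarrow> (u has_vector_derivative F t (u t)) (at t within {a..a+h})"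
proof -
  have "x0 \<in> cbox lo hi" using box \<open>0 \<le> h\<close> \<open>0 \<le> B\<close> by auto
  then have ordered: "\<And>i. i \<in> Basis \<Longrightarrow> lo \<bullet> i \<le> hi \<bullet> i"
    using box_ne_empty(1) by blast
  define G where "G t x = F t (clamp lo hi x)" for t x
  have G_joint: "continuous_on ({a..a+h} \<times> UNIV) (\<lambda>(t, x). G t x)"
    unfolding G_def using continuous_on_compose_clamp[OF cont ordered] .
  moreover have "norm (G t x - G t y) \<le> K * norm (x - y)" if "t \<in> {a..a+h}" for t x y
    using lip[OF that clamp_in_interval clamp_in_interval, OF ordered ordered]
      dist_clamps_le_dist_args[of lo hi x y] \<open>0 \<le> K\<close>
    unfolding G_def dist_norm by (meson mult_left_mono order_trans)
  ultimately obtain u where u_cont: "continuous_on {a..a+h} u"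
    and u_eq: "\<And>t. t \<in> {a..a+h} \<Longrightarrow> u t = x0 + integral {a..t} (\<lambda>s. G s (u s))"
    using picard_global_lipschitz[OF \<open>0 \<le> K\<close> \<open>h * K < 1\<close>] by blast
  have G_cont: "continuous_on {a..a+h} (\<lambda>s. G s (u s))"
    by (rule continuous_on_compose2[OF G_joint, of _ "\<lambda>s. (s, u s)", simplified])
      (auto intro!: continuous_intros u_cont)
  have u_ball: "u t \<in> cball x0 (h * B)" if "t \<in> {a..a+h}" for t
  proof -
    have "norm (integral {a..t} (\<lambda>s. G s (u s))) \<le> B * (t - a)"
      using that by (intro integral_bound continuous_on_subset[OF G_cont])
        (auto simp: G_def intro!: bnd clamp_in_interval ordered)
    also have "\<dots> \<le> B * h" using that \<open>0 \<le> B\<close> by (intro mult_left_mono) auto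
    finally show ?thesis using u_eq[OF that] by (simp add: dist_norm mult.commute)
  qed
  have G_eq: "G t (u t) = F t (u t)" if "t \<in> {a..a+h}" for t
    using u_ball[OF that] box by (auto simp: G_def)
  show ?thesis
  proof (rule that)
    show "u a = x0" using u_eq[of a] \<open>0 \<le> h\<close> by simp
    fix t assume t: "t \<in> {a..a+h}"
    show "u t \<in> cball x0 (h * B)" by (rule u_ball[OF t])
    have "((\<lambda>t. x0 + integral {a..t} (\<lambda>s. G s (u s))) has_vector_derivative 0 + G t (u t))
        (at t within {a..a+h})"
      by (intro has_vector_derivative_add has_vector_derivative_const
          integral_has_vector_derivative G_cont t)
    then show "(u has_vector_derivative F t (u t)) (at t within {a..a+h})"
      using G_eq[OF t] by (intro has_vector_derivative_transform[OF t u_eq]) simp_all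
  qed (rule u_cont)
qed

lemma picard_step_size:
  fixes B K r :: real
  assumes "0 \<le> B" "0 \<le> K" "0 < r"
  obtains h where "0 < h" "h \<le> 1" "h * K < 1" "h * B \<le> r"
proof
  define h where "h = min 1 (min (1 / (K + 1)) (r / (B + 1)))"
  show "0 < h" "h \<le> 1" using assms by (auto simp: h_def)
  have "h * K \<le> 1 / (K + 1) * K" using assms by (intro mult_right_mono) (auto simp: h_def)
  also have "\<dots> < 1" using assms by (simp add: field_simps)
  finally show "h * K < 1" .
  have "h * B \<le> r / (B + 1) * B" using assms by (intro mult_right_mono) (auto simp: h_def)
  also have "\<dots> \<le> r" using assms by (simp add: field_simps)
  finally show "h * B \<le> r" .
qed

lemma cball_subset_cbox_Pair:
  fixes x y r :: real
  shows "cball (x, y) r \<subseteq> cbox (x - r, y - r) (x + r, y + r)"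
proof
  fix z assume "z \<in> cball (x, y) r"
  moreover obtain u v where "z = (u, v)" by fastforce
  ultimately have "norm (x - u, y - v) \<le> r" by (simp add: dist_norm)
  then have "\<bar>x - u\<bar> \<le> r" "\<bar>y - v\<bar> \<le> r"
    using norm_fst_le[of "x - u" "y - v"] norm_snd_le[of "y - v" "x - u"] by simp_all
  then show "z \<in> cbox (x - r, y - r) (x + r, y + r)" using \<open>z = (u, v)\<close> by auto
qed

lemma mono_by_derivative:
  fixes f f' :: "real \<Rightarrow> real"
  assumes "a \<le> b"
    and "\<And>x. a \<le> x \<Longrightarrow> x \<le> b \<Longrightarrow> (f has_real_derivative f' x) (at x)"
    and "\<And>x. a \<le> x \<Longrightarrow> x \<le> b \<Longrightarrow> f' x \<ge> 0"
  shows "f a \<le> f b"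
  using assms(2,3) by (intro DERIV_nonneg_imp_nondecreasing[OF assms(1)] exI conjI)

lemma antimono_by_derivative:
  fixes f f' :: "real \<Rightarrow> real"
  assumes "a \<le> b"
    and "\<And>x. a \<le> x \<Longrightarrow> x \<le> b \<Longrightarrow> (f has_real_derivative f' x) (at x)"
    and "\<And>x. a \<le> x \<Longrightarrow> x \<le> b \<Longrightarrow> f' x \<le> 0"
  shows "f b \<le> f a"
  using assms(2,3) by (intro DERIV_nonpos_imp_nonincreasing[OF assms(1)] exI conjI)

lemma filterlim_at_top_ex_gt:
  fixes g :: "real \<Rightarrow> real"
  assumes "filterlim g at_top at_top"
  obtains x where "x \<ge> x0" "c < g x"
proof -
  have "\<forall>\<^sub>F x in at_top. c < g x \<and> x \<ge> x0"
    using assms by (intro eventually_conj) (auto simp: filterlim_at_top_dense)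
  then show ?thesis using that by (auto simp: eventually_at_top_linorder)
qed

lemma
  fixes f :: "real \<Rightarrow> real \<times> real"
  assumes "(f has_vector_derivative f') F"
  shows has_real_derivative_fst: "((\<lambda>x. fst (f x)) has_real_derivative fst f') F"
    and has_real_derivative_snd: "((\<lambda>x. snd (f x)) has_real_derivative snd f') F"
  using has_derivative_fst[OF assms[unfolded has_vector_derivative_def]]
    has_derivative_snd[OF assms[unfolded has_vector_derivative_def]]
  by (simp_all add: has_field_derivative_def mult_commute_abs)

lemma has_real_derivative_if_derivative_continuous:
  fixes f g :: "real \<Rightarrow> real"
  assumes "isCont f a" "isCont g a" "\<forall>\<^sub>F x in at a. (f has_real_derivative g x) (at x)"
  shows "(f has_real_derivative g a) (at a)"
  unfolding has_field_derivative_iff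
proof (rule lhopital[where f' = g and g' = "\<lambda>_. 1"])
  show "((\<lambda>y. f y - f a) \<longlongrightarrow> 0) (at a)"
    using assms(1) by (simp add: isCont_def LIM_zero)
  show "((\<lambda>y. y - a) \<longlongrightarrow> 0) (at a)"
    by (intro tendsto_eq_intros) auto
  show "\<forall>\<^sub>F y in at a. y - a \<noteq> 0"
    by (simp add: eventually_at_filter)
  show "\<forall>\<^sub>F y in at a. ((\<lambda>y. f y - f a) has_real_derivative g y) (at y)"
    using assms(3) by eventually_elim (auto intro!: derivative_eq_intros)
  show "\<forall>\<^sub>F y in at a. ((\<lambda>y. y - a) has_real_derivative 1) (at y)"
    by (rule always_eventually) (auto intro!: derivative_eq_intros)
  show "((\<lambda>y. g y / 1) \<longlongrightarrow> g a) (at a)"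
    using assms(2) by (simp add: isCont_def)
qed simp

lemma isCont_glue:
  fixes f1 f2 :: "real \<Rightarrow> real"
  assumes "(f1 \<longlongrightarrow> f2 a) (at_left a)" "continuous (at_right a) f2"
  shows "isCont (\<lambda>x. if x < a then f1 x else f2 x) a"
proof -
  have "((\<lambda>x. if x < a then f1 x else f2 x) \<longlongrightarrow> f2 a) (at_left a)"
    using assms(1) by (rule tendsto_cong[THEN iffD1, rotated]) (auto simp: eventually_at_filter)
  moreover have "((\<lambda>x. if x < a then f1 x else f2 x) \<longlongrightarrow> f2 a) (at_right a)"
    using assms(2) unfolding continuous_within
    by (rule tendsto_cong[THEN iffD1, rotated]) (auto simp: eventually_at_filter)
  ultimately show ?thesis
    unfolding isCont_def by (simp add: filterlim_at_split)
qed

lemma has_real_derivative_glue: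
  fixes f1 f2 g :: "real \<Rightarrow> real"
  assumes "r < a" "a < b" "r < x" "x < b"
    and d1: "\<And>x. r < x \<Longrightarrow> x < a \<Longrightarrow> (f1 has_real_derivative g x) (at x)"
    and d2: "\<And>x. a < x \<Longrightarrow> x < b \<Longrightarrow> (f2 has_real_derivative g x) (at x)"
    and cont: "isCont (\<lambda>x. if x < a then f1 x else f2 x) a" "isCont g a"
  shows "((\<lambda>x. if x < a then f1 x else f2 x) has_real_derivative g x) (at x)"
proof -
  have off: "((\<lambda>x. if x < a then f1 x else f2 x) has_real_derivative g y) (at y)"
    if "r < y" "y < b" "y \<noteq> a" for y
  proof (cases "y < a")
    case True
    show ?thesis
      by (rule has_field_derivative_transform_within_open[OF d1, of y "{r<..<a}"]) (use that True in auto)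
  next
    case False
    show ?thesis
      by (rule has_field_derivative_transform_within_open[OF d2, of y "{a<..<b}"]) (use that False in auto)
  qed
  have "\<forall>\<^sub>F y in at a. y \<in> {r<..<b} - {a}"
    using assms by (intro eventually_at_in_open) auto
  then have "((\<lambda>x. if x < a then f1 x else f2 x) has_real_derivative g a) (at a)"
    by (intro has_real_derivative_if_derivative_continuous[OF cont]) (auto elim!: eventually_mono off)
  then show ?thesis using off assms by (cases "x = a") auto
qed

lemma mono_bounded_tendsto_at_left:
  fixes f :: "real \<Rightarrow> real"
  assumes "r < a"
    and "\<And>x y. r \<le> x \<Longrightarrow> x \<le> y \<Longrightarrow> y < a \<Longrightarrow> f x \<le> f y"
    and "\<And>x. r \<le> x \<Longrightarrow> x < a \<Longrightarrow> f x \<le> B"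
  shows "\<exists>L. (f \<longlongrightarrow> L) (at_left a)"
proof -
  have "(f \<longlongrightarrow> Sup (f ` ({..<a} \<inter> {r..}))) (at a within ({..<a} \<inter> {r..}))"
    by (rule Lim_left_bound) (use assms in auto)
  moreover have "at a within ({..<a} \<inter> {r..}) = at_left a"
    by (rule at_within_nhd[of _ "{r<..}"]) (use assms in auto)
  ultimately show ?thesis by auto
qed

section \<open>Asymptotically polytropic equations of state\<close>

locale asympt_polytropic_eos =
  fixes rho :: "real \<Rightarrow> real" and n0 n1 a0 a1 :: real
  assumes asympt_polytropic: "asympt_polytropic rho n0 n1 a0 a1"
begin

abbreviation "eta \<equiv> eos_eta rho"
abbreviation "rho_eta \<equiv> rho_of_eta rho"
abbreviation "index \<equiv> index_fun rho"

lemma rho_pos: "p > 0 \<Longrightarrow> rho p > 0"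
  using asympt_polytropic by (auto simp: asympt_polytropic_def barotropic_eos_def)

lemma inverse_rho_integrable: "p > 0 \<Longrightarrow> set_integrable lborel {0<..p} (\<lambda>q. 1 / rho q)"
  using asympt_polytropic by (auto simp: asympt_polytropic_def barotropic_eos_def)

lemma eta_diff:
  assumes "0 \<le> p" "p < q"
  shows "eta q - eta p = (LBINT s:{p<..q}. 1 / rho s)"
proof -
  have int: "set_integrable lborel A (\<lambda>s. 1 / rho s)" if "A \<subseteq> {0<..q}" "A \<in> sets lborel" for A
    by (rule set_integrable_subset[OF inverse_rho_integrable]) (use assms that in auto)
  have "{0<..q} = {0<..p} \<union> {p<..q}" using assms by auto
  then have "eta q = eta p + (LBINT s:{p<..q}. 1 / rho s)"
    unfolding eos_eta_def by (simp add: set_integral_Un int)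
  then show ?thesis by simp
qed

lemma eta_strict_mono:
  assumes "0 \<le> p" "p < q"
  shows "eta p < eta q"
proof -
  define f where "f = (\<lambda>s. indicator {p<..q} s * (1 / rho s))"
  have "set_integrable lborel {p<..q} (\<lambda>s. 1 / rho s)"
    by (rule set_integrable_subset[OF inverse_rho_integrable[of q]]) (use assms in auto)
  then have f_int: "integrable lborel f" by (simp add: f_def set_integrable_def)
  have f_nonneg: "0 \<le> f s" for s
    using rho_pos[of s] assms by (auto simp: f_def indicator_def)
  have "integral\<^sup>L lborel f \<noteq> 0"
  proof
    assume "integral\<^sup>L lborel f = 0"
    then have "AE s in lborel. f s = 0"
      using integral_nonneg_eq_0_iff_AE[OF f_int] f_nonneg by simp
    moreover have "f s \<noteq> 0" if "s \<in> {p<..q}" for s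
      using rho_pos[of s] assms that by (simp add: f_def)
    ultimately have "AE s in lborel. s \<notin> {p<..q}"
      by (auto elim: AE_mp)
    then have "emeasure lborel {p<..q} = 0"
      by (subst (asm) AE_iff_measurable[of "{p<..q}"]) auto
    then show False using assms by simp
  qed
  moreover have "integral\<^sup>L lborel f \<ge> 0" using f_nonneg by simp
  ultimately have "(LBINT s:{p<..q}. 1 / rho s) > 0"
    by (simp add: set_lebesgue_integral_def f_def)
  then show ?thesis using eta_diff[OF assms] by linarith
qed

lemma eta_0: "eta 0 = 0"
  by (simp add: eos_eta_def set_lebesgue_integral_def)

lemma eta_pos: "p > 0 \<Longrightarrow> eta p > 0"
  using eta_strict_mono[of 0 p] by (simp add: eta_0)

lemma eta_mono: "0 \<le> p \<Longrightarrow> p \<le> q \<Longrightarrow> eta p \<le> eta q"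
  using eta_strict_mono[of p q] by (cases "p = q") auto

lemma rho_of_eta_eta: "0 \<le> p \<Longrightarrow> rho_eta (eta p) = rho p"
  unfolding rho_of_eta_def p_of_eta_def
  by (rule arg_cong[where f = rho], rule the_equality)
    (auto, metis eta_strict_mono less_irrefl neq_iff)

lemma eta_eq_integral: "0 \<le> p \<Longrightarrow> eta p = integral {0..p} (\<lambda>q. 1 / rho q)"
proof (cases "p = 0")
  case False
  assume "0 \<le> p"
  then have "eta p = integral {0<..p} (\<lambda>q. 1 / rho q)"
    using False unfolding eos_eta_def
    by (intro set_borel_integral_eq_integral(2) inverse_rho_integrable) simp
  also have "\<dots> = integral {0..p} (\<lambda>q. 1 / rho q)"
    by (rule integral_spike_set; rule negligible_subset[of "{0}"]; auto)
  finally show ?thesis .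
qed (simp add: eta_0)

lemma inverse_rho_integrable_on: "p > 0 \<Longrightarrow> (\<lambda>q. 1 / rho q) integrable_on {0..p}"
  by (rule integrable_spike_set[OF set_borel_integral_eq_integral(1)[OF inverse_rho_integrable]])
    (auto intro: negligible_subset[of "{0}"])

lemma isCont_eta: "p > 0 \<Longrightarrow> isCont eta p"
proof -
  assume "p > 0"
  have "continuous_on {0..p+1} (\<lambda>q. integral {0..q} (\<lambda>s. 1 / rho s))"
    using \<open>p > 0\<close> by (intro indefinite_integral_continuous_1 inverse_rho_integrable_on) simp
  then have "continuous_on {0..p+1} eta"
    by (rule continuous_on_cong[THEN iffD1, rotated 2]) (auto simp: eta_eq_integral)
  then show ?thesis
    by (rule continuous_on_interior) (use \<open>p > 0\<close> in auto)
qed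

lemma eta_surj: "e > 0 \<Longrightarrow> \<exists>p>0. eta p = e"
  using asympt_polytropic by (auto simp: asympt_polytropic_def)

lemma rho_of_eta_pos: "e > 0 \<Longrightarrow> rho_eta e > 0"
  using eta_surj[of e] rho_of_eta_eta rho_pos by force

lemma index_nonneg: "e > 0 \<Longrightarrow> index e \<ge> 0"
  using asympt_polytropic by (auto simp: asympt_polytropic_def)

lemma index_bounded: "\<exists>B. \<forall>e>0. index e \<le> B"
proof -
  have "bounded (index ` {0<..})" using asympt_polytropic by (auto simp: asympt_polytropic_def)
  then show ?thesis by (auto simp: bounded_iff dest: abs_le_D1)
qed

lemma rho_of_eta_has_derivative:
  "e > 0 \<Longrightarrow> (rho_eta has_real_derivative index e * rho_eta e / e) (at e)"
proof -
  assume "e > 0"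
  then have "rho_eta differentiable (at e)" using asympt_polytropic by (auto simp: asympt_polytropic_def)
  moreover have "index e * rho_eta e / e = deriv rho_eta e"
    using \<open>e > 0\<close> rho_of_eta_pos[of e] by (simp add: index_fun_def)
  ultimately show ?thesis by (simp add: DERIV_deriv_iff_real_differentiable)
qed

lemma rho_of_eta_mono:
  assumes "0 < e" "e \<le> e'"
  shows "rho_eta e \<le> rho_eta e'"
proof (rule DERIV_nonneg_imp_nondecreasing[OF assms(2)])
  fix x assume "e \<le> x"
  then have "x > 0" using assms by simp
  then show "\<exists>y. (rho_eta has_real_derivative y) (at x) \<and> 0 \<le> y"
    using rho_of_eta_has_derivative[OF \<open>x > 0\<close>] index_nonneg[OF \<open>x > 0\<close>]
      rho_of_eta_pos[OF \<open>x > 0\<close>] \<open>x > 0\<close>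
    by (intro exI[of _ "index x * rho_eta x / x"] conjI) auto
qed

lemma rho_eq_rho_of_eta: "q > 0 \<Longrightarrow> rho q = rho_eta (eta q)"
  using rho_of_eta_eta by simp

lemma rho_mono: "0 < p \<Longrightarrow> p \<le> q \<Longrightarrow> rho p \<le> rho q"
  using rho_of_eta_mono[of "eta p" "eta q"] eta_pos[of p] eta_mono[of p q] rho_eq_rho_of_eta
  by simp

lemma isCont_rho: "p > 0 \<Longrightarrow> isCont rho p"
proof -
  assume "p > 0"
  have "isCont (\<lambda>q. rho_eta (eta q)) p"
    using isCont_eta[OF \<open>p > 0\<close>] rho_of_eta_has_derivative[OF eta_pos[OF \<open>p > 0\<close>]]
    by (auto intro: isCont_o2 DERIV_isCont)
  moreover have "\<forall>\<^sub>F q in nhds p. rho q = rho_eta (eta q)"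
    using eventually_nhds_in_open[of "{0<..}" p] \<open>p > 0\<close>
    by (auto elim!: eventually_mono simp: rho_eq_rho_of_eta)
  then have "isCont rho p = isCont (\<lambda>q. rho_eta (eta q)) p" by (rule isCont_cong)
  ultimately show ?thesis by simp
qed

lemma eta_has_derivative: "p > 0 \<Longrightarrow> (eta has_real_derivative 1 / rho p) (at p)"
proof -
  assume "p > 0"
  have cont: "isCont (\<lambda>q. 1 / rho q) p"
    using isCont_rho[OF \<open>p > 0\<close>] rho_pos[OF \<open>p > 0\<close>] by (intro isCont_divide) auto
  have "((\<lambda>q. integral {0..q} (\<lambda>s. 1 / rho s)) has_vector_derivative 1 / rho p)
      (at p within {0..p+1} - {})"
    by (rule integral_has_vector_derivative_continuous_at[OF inverse_rho_integrable_on])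
      (use \<open>p > 0\<close> cont in \<open>auto intro: continuous_at_imp_continuous_within\<close>)
  then have "((\<lambda>q. integral {0..q} (\<lambda>s. 1 / rho s)) has_real_derivative 1 / rho p) (at p within {0..p+1})"
    by (simp add: has_real_derivative_iff_has_vector_derivative)
  then have "((\<lambda>q. integral {0..q} (\<lambda>s. 1 / rho s)) has_real_derivative 1 / rho p) (at p)"
    using at_within_Icc_at[of 0 p "p+1"] \<open>p > 0\<close> by simp
  then show ?thesis
    by (rule has_field_derivative_transform_within_open[of _ _ _ "{0<..}"])
      (use \<open>p > 0\<close> eta_eq_integral in auto)
qed

lemma rho_has_derivative: "p > 0 \<Longrightarrow> (rho has_real_derivative index (eta p) / eta p) (at p)"
proof -
  assume "p > 0"
  have "((\<lambda>q. rho_eta (eta q)) has_real_derivative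
      (index (eta p) * rho_eta (eta p) / eta p) * (1 / rho p)) (at p)"
    by (rule DERIV_chain2[OF rho_of_eta_has_derivative[OF eta_pos] eta_has_derivative]) fact+
  then have "((\<lambda>q. rho_eta (eta q)) has_real_derivative index (eta p) / eta p) (at p)"
    using rho_eq_rho_of_eta[OF \<open>p > 0\<close>] rho_pos[OF \<open>p > 0\<close>] by simp
  then show ?thesis
    by (rule has_field_derivative_transform_within_open[of _ _ _ "{0<..}"])
      (use \<open>p > 0\<close> rho_eq_rho_of_eta in auto)
qed

text \<open>The index is bounded, so rho' = n(eta)/eta is bounded away from p = 0.\<close>

lemma rho_lipschitz:
  assumes "p0 > 0"
  obtains K where "K \<ge> 0" "\<And>p q. p0 \<le> p \<Longrightarrow> p0 \<le> q \<Longrightarrow> \<bar>rho p - rho q\<bar> \<le> K * \<bar>p - q\<bar>"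
proof -
  obtain B where B: "\<And>e. e > 0 \<Longrightarrow> index e \<le> B" using index_bounded by blast
  have eta_p0: "0 < eta p0" using eta_pos assms by simp
  have deriv_bound: "norm (index (eta s) / eta s) \<le> \<bar>B\<bar> / eta p0" if "s \<in> {p0..}" for s
  proof -
    have "eta p0 \<le> eta s" using eta_mono[of p0 s] assms that by simp
    moreover have "0 \<le> index (eta s)" "index (eta s) \<le> \<bar>B\<bar>"
      using index_nonneg[of "eta s"] B[of "eta s"] eta_p0 \<open>eta p0 \<le> eta s\<close> by auto
    ultimately have "index (eta s) / eta s \<le> \<bar>B\<bar> / eta p0"
      using eta_p0 by (intro frac_le) auto
    moreover have "0 \<le> index (eta s) / eta s"
      using \<open>0 \<le> index (eta s)\<close> eta_p0 \<open>eta p0 \<le> eta s\<close> by (intro divide_nonneg_pos) auto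
    ultimately show ?thesis unfolding real_norm_def by (subst abs_of_nonneg)
  qed
  have deriv: "(rho has_real_derivative index (eta s) / eta s) (at s within {p0..})" if "s \<in> {p0..}" for s
    using that assms by (intro has_field_derivative_at_within[OF rho_has_derivative]) simp
  have "norm (rho p - rho q) \<le> \<bar>B\<bar> / eta p0 * norm (p - q)" if "p0 \<le> p" "p0 \<le> q" for p q
    using that by (intro field_differentiable_bound[of "{p0..}", OF _ deriv deriv_bound]) auto
  moreover have "\<bar>B\<bar> / eta p0 \<ge> 0" using eta_p0 by simp
  ultimately show ?thesis using that[of "\<bar>B\<bar> / eta p0"] by simp
qed

text \<open>Since (ln rho_eta)' = n/eta and n \<le> 3 + C eta^a0 near 0, the function
  ln rho_eta - 3 ln eta - (C/a0) eta^a0 is nonincreasing there.\<close>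

lemma rho_of_eta_cubic_lower_bound:
  assumes "n0 \<le> 3"
  obtains c e0 where "c > 0" "e0 > 0" "\<And>e. 0 < e \<Longrightarrow> e \<le> e0 \<Longrightarrow> c * e ^ 3 \<le> rho_eta e"
proof -
  have a0: "a0 > 0" and "(\<lambda>e. index e - n0) \<in> O[at_right 0](\<lambda>e. e powr a0)"
    using asympt_polytropic by (auto simp: asympt_polytropic_def)
  then obtain C where "C > 0" "\<forall>\<^sub>F e in at_right 0. norm (index e - n0) \<le> C * norm (e powr a0)"
    by (auto simp: bigo_def)
  then obtain \<delta> where "\<delta> > 0" and index_le: "\<And>e. 0 < e \<Longrightarrow> e < \<delta> \<Longrightarrow> index e \<le> 3 + C * e powr a0"
    using assms unfolding eventually_at_right_field by (fastforce simp: abs_le_iff)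
  define h where "h e = ln (rho_eta e) - 3 * ln e - (C / a0) * e powr a0" for e
  define e0 where "e0 = \<delta> / 2"
  have h_deriv: "(h has_real_derivative (index e - 3 - C * e powr a0) / e) (at e)" if "e > 0" for e
  proof -
    have "(h has_real_derivative (1 / rho_eta e) * (index e * rho_eta e / e) - 3 * (1 / e)
        - (C / a0) * (a0 * e powr (a0 - 1))) (at e)"
      unfolding h_def using that
      by (intro DERIV_diff DERIV_cmult DERIV_chain2[OF DERIV_ln_divide rho_of_eta_has_derivative]
          DERIV_ln_divide has_real_derivative_powr rho_of_eta_pos)
    moreover have "(1 / rho_eta e) * (index e * rho_eta e / e) - 3 * (1 / e)
        - (C / a0) * (a0 * e powr (a0 - 1)) = (index e - 3 - C * e powr a0) / e"
      using that rho_of_eta_pos[OF that] a0 by (simp add: powr_diff field_simps)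
    ultimately show ?thesis by simp
  qed
  have h_ge: "h e0 \<le> h e" if "0 < e" "e \<le> e0" for e
  proof (rule DERIV_nonpos_imp_nonincreasing[OF \<open>e \<le> e0\<close>])
    fix x assume "e \<le> x" "x \<le> e0"
    then have "0 < x" "x < \<delta>" using that \<open>\<delta> > 0\<close> by (auto simp: e0_def)
    then show "\<exists>y. (h has_real_derivative y) (at x) \<and> y \<le> 0"
      using h_deriv index_le[of x] by (intro exI conjI) (auto simp: divide_nonpos_pos)
  qed
  have "exp (h e0) * e ^ 3 \<le> rho_eta e" if "0 < e" "e \<le> e0" for e
  proof -
    have "0 \<le> (C / a0) * e powr a0" using \<open>C > 0\<close> a0 by simp
    then have "h e0 + 3 * ln e \<le> ln (rho_eta e)"
      using h_ge[OF that] unfolding h_def by linarith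
    then have "exp (h e0 + 3 * ln e) \<le> rho_eta e"
      using rho_of_eta_pos[OF \<open>0 < e\<close>] by (metis exp_le_cancel_iff exp_ln)
    moreover have "exp (3 * ln e) = e ^ 3"
      using exp_of_nat_mult[of 3 "ln e"] \<open>0 < e\<close> by simp
    ultimately show ?thesis by (simp add: exp_add)
  qed
  then show ?thesis using that[of "exp (h e0)" e0] \<open>\<delta> > 0\<close> by (simp add: e0_def)
qed

subsection \<open>Local solutions of the fluid equations\<close>

definition fluid_field :: "real \<Rightarrow> real \<times> real \<Rightarrow> real \<times> real" where
  "fluid_field t z = (4 * pi * t\<^sup>2 * rho (snd z), - (fst z * rho (snd z) / t\<^sup>2))"

lemma fluid_field_bound:
  assumes "0 < a" "a \<le> t" "t \<le> b" "\<bar>x\<bar> \<le> X" "0 < p0" "p0 \<le> y" "y \<le> p1"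
  shows "norm (fluid_field t (x, y)) \<le> 4 * pi * b\<^sup>2 * rho p1 + X * rho p1 / a\<^sup>2"
proof -
  have "0 < rho y" "rho y \<le> rho p1" "a\<^sup>2 \<le> t\<^sup>2" "t\<^sup>2 \<le> b\<^sup>2"
    using assms rho_pos[of y] rho_mono[of y p1] by (auto intro!: power_mono)
  then have "\<bar>4 * pi * t\<^sup>2 * rho y\<bar> \<le> 4 * pi * b\<^sup>2 * rho p1"
    and "\<bar>x * rho y / t\<^sup>2\<bar> \<le> X * rho p1 / a\<^sup>2"
    using assms by (auto simp: abs_mult intro!: frac_le mult_mono)
  then show ?thesis
    using norm_Pair_le[of "4 * pi * t\<^sup>2 * rho y" "- (x * rho y / t\<^sup>2)"]
    by (simp add: fluid_field_def)
qed

lemma fluid_field_lipschitz: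
  assumes "0 < a" "a \<le> t" "t \<le> b" "\<bar>x'\<bar> \<le> X" "0 < p0" "p0 \<le> y" "y \<le> p1" "p0 \<le> y'" "0 \<le> K0"
    and rho_lip: "\<And>p q. p0 \<le> p \<Longrightarrow> p0 \<le> q \<Longrightarrow> \<bar>rho p - rho q\<bar> \<le> K0 * \<bar>p - q\<bar>"
  shows "norm (fluid_field t (x, y) - fluid_field t (x', y'))
    \<le> (4 * pi * b\<^sup>2 * K0 + (rho p1 + X * K0) / a\<^sup>2) * norm ((x, y) - (x', y'))"
proof -
  define N where "N = norm ((x, y) - (x', y'))"
  have dx: "\<bar>x - x'\<bar> \<le> N" and dy: "\<bar>y - y'\<bar> \<le> N"
    using norm_fst_le[of "x - x'" "y - y'"] norm_snd_le[of "y - y'" "x - x'"] by (simp_all add: N_def)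
  have rho_diff: "\<bar>rho y - rho y'\<bar> \<le> K0 * N"
    using rho_lip[OF assms(6,8)] mult_left_mono[OF dy \<open>0 \<le> K0\<close>] by linarith
  have "0 < rho y" "rho y \<le> rho p1" "a\<^sup>2 \<le> t\<^sup>2" "t\<^sup>2 \<le> b\<^sup>2"
    using assms rho_pos[of y] rho_mono[of y p1] by (auto intro!: power_mono)
  have "\<bar>4 * pi * t\<^sup>2 * rho y - 4 * pi * t\<^sup>2 * rho y'\<bar> = 4 * pi * t\<^sup>2 * \<bar>rho y - rho y'\<bar>"
    by (simp add: abs_mult right_diff_distrib[symmetric])
  also have "\<dots> \<le> 4 * pi * b\<^sup>2 * (K0 * N)"
    using \<open>t\<^sup>2 \<le> b\<^sup>2\<close> rho_diff by (intro mult_mono) auto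
  finally have d1: "\<bar>4 * pi * t\<^sup>2 * rho y - 4 * pi * t\<^sup>2 * rho y'\<bar> \<le> 4 * pi * b\<^sup>2 * K0 * N"
    by simp
  have "x * rho y - x' * rho y' = (x - x') * rho y + x' * (rho y - rho y')"
    by (simp add: algebra_simps)
  then have "\<bar>x * rho y - x' * rho y'\<bar> \<le> \<bar>x - x'\<bar> * rho y + \<bar>x'\<bar> * \<bar>rho y - rho y'\<bar>"
    using abs_triangle_ineq[of "(x - x') * rho y" "x' * (rho y - rho y')"] \<open>0 < rho y\<close>
    by (simp add: abs_mult)
  also have "\<dots> \<le> N * rho p1 + X * (K0 * N)"
    using dx \<open>0 < rho y\<close> \<open>rho y \<le> rho p1\<close> rho_diff assms(4) by (intro add_mono mult_mono) auto
  also have "\<dots> = (rho p1 + X * K0) * N" by (simp add: algebra_simps)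
  finally have "\<bar>x * rho y / t\<^sup>2 - x' * rho y' / t\<^sup>2\<bar> \<le> (rho p1 + X * K0) * N / a\<^sup>2"
    using \<open>a\<^sup>2 \<le> t\<^sup>2\<close> \<open>0 < a\<close> by (simp add: diff_divide_distrib[symmetric]) (intro frac_le; simp)
  with d1 show ?thesis
    using norm_Pair_le[of "4 * pi * t\<^sup>2 * rho y - 4 * pi * t\<^sup>2 * rho y'"
        "- (x * rho y / t\<^sup>2) - - (x' * rho y' / t\<^sup>2)"]
    by (simp add: fluid_field_def N_def algebra_simps)
qed

lemma fluid_field_bounded_lipschitz:
  assumes "0 < a" "0 < p0"
  obtains B K where "0 \<le> B" "0 \<le> K"
    and "\<And>t z. t \<in> {a..b} \<Longrightarrow> z \<in> cbox (-X, p0) (X, p1) \<Longrightarrow> norm (fluid_field t z) \<le> B"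
    and "\<And>t z w. t \<in> {a..b} \<Longrightarrow> z \<in> cbox (-X, p0) (X, p1) \<Longrightarrow> w \<in> cbox (-X, p0) (X, p1) \<Longrightarrow>
      norm (fluid_field t z - fluid_field t w) \<le> K * norm (z - w)"
proof (cases "p0 \<le> p1 \<and> 0 \<le> X")
  case True
  obtain K0 where "0 \<le> K0" and rho_lip: "\<And>p q. p0 \<le> p \<Longrightarrow> p0 \<le> q \<Longrightarrow> \<bar>rho p - rho q\<bar> \<le> K0 * \<bar>p - q\<bar>"
    using rho_lipschitz[OF \<open>0 < p0\<close>] by blast
  have "0 < rho p1" using rho_pos True assms by simp
  show ?thesis
  proof (rule that)
    show "0 \<le> 4 * pi * b\<^sup>2 * rho p1 + X * rho p1 / a\<^sup>2"
      "0 \<le> 4 * pi * b\<^sup>2 * K0 + (rho p1 + X * K0) / a\<^sup>2"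
      using True \<open>0 < rho p1\<close> \<open>0 \<le> K0\<close> by simp_all
    show "norm (fluid_field t z) \<le> 4 * pi * b\<^sup>2 * rho p1 + X * rho p1 / a\<^sup>2"
      if "t \<in> {a..b}" "z \<in> cbox (-X, p0) (X, p1)" for t z
    proof -
      obtain x y where "z = (x, y)" by fastforce
      then show ?thesis using that assms fluid_field_bound[of a t b x X p0 y p1] by auto
    qed
    show "norm (fluid_field t z - fluid_field t w)
        \<le> (4 * pi * b\<^sup>2 * K0 + (rho p1 + X * K0) / a\<^sup>2) * norm (z - w)"
      if "t \<in> {a..b}" "z \<in> cbox (-X, p0) (X, p1)" "w \<in> cbox (-X, p0) (X, p1)" for t z w
    proof -
      obtain x y x' y' where "z = (x, y)" "w = (x', y')" by fastforce
      then show ?thesis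
        using that assms \<open>0 \<le> K0\<close> rho_lip fluid_field_lipschitz[of a t b x' X p0 y p1 y' K0 x] by auto
    qed
  qed
next
  case False
  then have "cbox (-X, p0) (X, p1) = {}" by auto
  then show ?thesis using that[of 0 0] by simp
qed

lemma continuous_on_fluid_field:
  assumes "0 < a" "0 < p0"
  shows "continuous_on ({a..b} \<times> cbox (-X, p0) (X, p1)) (\<lambda>(t, z). fluid_field t z)"
proof -
  have "continuous_on {p0..p1} rho"
    using \<open>0 < p0\<close> by (intro continuous_at_imp_continuous_on ballI isCont_rho) auto
  then have "continuous_on ({a..b} \<times> cbox (-X, p0) (X, p1)) (\<lambda>q. rho (snd (snd q)))"
    by (rule continuous_on_compose2) (auto intro!: continuous_intros simp: mem_Times_iff)
  moreover have "fst q \<noteq> 0" if "q \<in> {a..b} \<times> cbox (-X, p0) (X, p1)" for q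
    using that \<open>0 < a\<close> by auto
  ultimately show ?thesis
    unfolding fluid_field_def case_prod_beta' by (intro continuous_intros) auto
qed

lemma fluid_solution_local_existence:
  assumes "0 < a" "0 < L"
  obtains h u v where "0 < h" "u a = M" "v a = L"
    and "continuous_on {a..a+h} u" "continuous_on {a..a+h} v"
    and "fluid_solution rho u v {a<..<a+h}"
proof -
  define X where "X = \<bar>M\<bar> + 1"
  define box where "box = cbox (-X, L / 2) (X, 3 * L / 2)"
  obtain B K where "0 \<le> B" "0 \<le> K"
    and bnd: "\<And>t z. t \<in> {a..a+1} \<Longrightarrow> z \<in> box \<Longrightarrow> norm (fluid_field t z) \<le> B"
    and lip: "\<And>t z w. t \<in> {a..a+1} \<Longrightarrow> z \<in> box \<Longrightarrow> w \<in> box \<Longrightarrow>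
      norm (fluid_field t z - fluid_field t w) \<le> K * norm (z - w)"
    using fluid_field_bounded_lipschitz[OF \<open>0 < a\<close>, of "L / 2" "a + 1" X "3 * L / 2"] \<open>0 < L\<close>
    unfolding box_def by auto
  obtain h where "0 < h" "h \<le> 1" "h * K < 1" "h * B \<le> min 1 (L / 2)"
    using picard_step_size[OF \<open>0 \<le> B\<close> \<open>0 \<le> K\<close>, of "min 1 (L / 2)"] \<open>0 < L\<close> by auto
  have ball: "cball (M, L) (h * B) \<subseteq> box"
  proof (rule order_trans[OF cball_subset_cbox_Pair])
    show "cbox (M - h * B, L - h * B) (M + h * B, L + h * B) \<subseteq> box"
      using \<open>h * B \<le> min 1 (L / 2)\<close> by (auto simp: box_def X_def cbox_Pair_eq)
  qed
  have sub: "{a..a+h} \<subseteq> {a..a+1}" using \<open>h \<le> 1\<close> by auto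
  obtain U where "U a = (M, L)" "continuous_on {a..a+h} U"
    and U_ball: "\<And>t. t \<in> {a..a+h} \<Longrightarrow> U t \<in> cball (M, L) (h * B)"
    and U_deriv: "\<And>t. t \<in> {a..a+h} \<Longrightarrow>
      (U has_vector_derivative fluid_field t (U t)) (at t within {a..a+h})"
  proof (rule picard_lindeloef_local)
    show "cball (M, L) (h * B) \<subseteq> cbox (-X, L / 2) (X, 3 * L / 2)" using ball by (simp add: box_def)
    show "continuous_on ({a..a+h} \<times> cbox (-X, L / 2) (X, 3 * L / 2)) (\<lambda>(t, z). fluid_field t z)"
      using \<open>0 < a\<close> \<open>0 < L\<close> by (intro continuous_on_fluid_field) auto
  qed (use \<open>0 < h\<close> \<open>0 \<le> B\<close> \<open>0 \<le> K\<close> \<open>h * K < 1\<close> bnd lip sub in \<open>auto simp: box_def\<close>)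
  show ?thesis
  proof (rule that[of h "\<lambda>t. fst (U t)" "\<lambda>t. snd (U t)"])
    show "continuous_on {a..a+h} (\<lambda>t. fst (U t))" "continuous_on {a..a+h} (\<lambda>t. snd (U t))"
      using \<open>continuous_on {a..a+h} U\<close> by (auto intro: continuous_intros)
    show "fluid_solution rho (\<lambda>t. fst (U t)) (\<lambda>t. snd (U t)) {a<..<a+h}"
      unfolding fluid_solution_def
    proof (intro ballI conjI)
      fix t assume t: "t \<in> {a<..<a+h}"
      show "t > 0" using t \<open>0 < a\<close> by simp
      have "U t \<in> box" using U_ball[of t] ball t by auto
      then show "snd (U t) > 0" using \<open>0 < L\<close> by (cases "U t") (auto simp: box_def)
      have "at t within {a..a+h} = at t" using t by (intro at_within_Icc_at) auto
      then have "(U has_vector_derivative fluid_field t (U t)) (at t)" using U_deriv[of t] t by simp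
      from has_real_derivative_fst[OF this] has_real_derivative_snd[OF this]
      show "((\<lambda>t. fst (U t)) has_real_derivative 4 * pi * t\<^sup>2 * rho (snd (U t))) (at t)"
        "((\<lambda>t. snd (U t)) has_real_derivative - (fst (U t) * rho (snd (U t)) / t\<^sup>2)) (at t)"
        by (simp_all add: fluid_field_def)
    qed
  qed (use \<open>0 < h\<close> \<open>U a = (M, L)\<close> in simp_all)
qed

lemma fluid_solution_glue:
  assumes sol: "fluid_solution rho m P {r. r0 < r \<and> r < a}" and sol_right: "fluid_solution rho u v {a<..<b}"
    and "r0 < a" "a < b" "0 < a" "0 < v a"
    and lim_m: "(m \<longlongrightarrow> u a) (at_left a)" and lim_P: "(P \<longlongrightarrow> v a) (at_left a)"
    and "continuous (at_right a) u" "continuous (at_right a) v"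
  shows "fluid_solution rho (\<lambda>x. if x < a then m x else u x) (\<lambda>x. if x < a then P x else v x)
    {r. r0 < r \<and> r < b}"
proof -
  define m' where "m' = (\<lambda>x. if x < a then m x else u x)"
  define P' where "P' = (\<lambda>x. if x < a then P x else v x)"
  have cont_m': "isCont m' a" unfolding m'_def using assms by (intro isCont_glue)
  have cont_P': "isCont P' a" unfolding P'_def using assms by (intro isCont_glue)
  have "P' a = v a" by (simp add: P'_def)
  then have cont_rho: "isCont (\<lambda>x. rho (P' x)) a"
    using \<open>0 < v a\<close> by (intro isCont_o2[OF cont_P'] isCont_rho) simp
  have "fluid_solution rho m' P' {r. r0 < r \<and> r < b}"
    unfolding fluid_solution_def
  proof (intro ballI conjI)
    fix x assume "x \<in> {r. r0 < r \<and> r < b}"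
    then have x: "r0 < x" "x < b" by auto
    show "0 < x" using sol x \<open>0 < a\<close> by (cases "x < a") (auto simp: fluid_solution_def)
    show "0 < P' x"
      using sol sol_right x \<open>0 < v a\<close> by (cases x a rule: linorder_cases) (auto simp: fluid_solution_def P'_def)
    show "(m' has_real_derivative 4 * pi * x\<^sup>2 * rho (P' x)) (at x)"
      unfolding m'_def
      by (rule has_real_derivative_glue[OF \<open>r0 < a\<close> \<open>a < b\<close> x])
        (use sol sol_right cont_m'[unfolded m'_def] cont_rho[unfolded P'_def] in
          \<open>auto simp: fluid_solution_def P'_def intro!: continuous_intros\<close>)
    show "(P' has_real_derivative - (m' x * rho (P' x) / x\<^sup>2)) (at x)"
      unfolding P'_def
      by (rule has_real_derivative_glue[OF \<open>r0 < a\<close> \<open>a < b\<close> x])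
        (use sol sol_right \<open>0 < a\<close> cont_P'[unfolded P'_def] cont_m'[unfolded m'_def]
          cont_rho[unfolded P'_def] in \<open>auto simp: fluid_solution_def m'_def intro!: continuous_intros\<close>)
  qed
  then show ?thesis by (simp add: m'_def P'_def)
qed

lemma fluid_solution_extension:
  assumes sol: "fluid_solution rho m P {r. r0 < r \<and> r < a}" and "r0 < a"
    and lim_m: "(m \<longlongrightarrow> M) (at_left a)" and lim_P: "(P \<longlongrightarrow> L) (at_left a)" and "0 < L"
  obtains b m' P' where "a < b" "fluid_solution rho m' P' {r. r0 < r \<and> r < b}"
    and "\<And>r. r < a \<Longrightarrow> m' r = m r \<and> P' r = P r"
proof -
  have "(r0 + a) / 2 \<in> {r. r0 < r \<and> r < a}" using \<open>r0 < a\<close> by simp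
  then have "0 < (r0 + a) / 2" using sol unfolding fluid_solution_def by blast
  then have "0 < a" using \<open>r0 < a\<close> by simp
  obtain h u v where "0 < h" "u a = M" "v a = L"
    and "continuous_on {a..a+h} u" "continuous_on {a..a+h} v"
    and sol_right: "fluid_solution rho u v {a<..<a+h}"
    using fluid_solution_local_existence[OF \<open>0 < a\<close> \<open>0 < L\<close>] by blast
  have "continuous (at_right a) u" "continuous (at_right a) v"
    using continuous_on_Icc_at_rightD[OF \<open>continuous_on {a..a+h} u\<close>]
      continuous_on_Icc_at_rightD[OF \<open>continuous_on {a..a+h} v\<close>] \<open>0 < h\<close>
    by (simp_all add: continuous_within)
  then have "fluid_solution rho (\<lambda>x. if x < a then m x else u x) (\<lambda>x. if x < a then P x else v x)
      {r. r0 < r \<and> r < a + h}"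
    using sol sol_right \<open>r0 < a\<close> \<open>0 < h\<close> \<open>0 < a\<close> \<open>0 < L\<close> \<open>u a = M\<close> \<open>v a = L\<close> lim_m lim_P
    by (intro fluid_solution_glue) auto
  then show ?thesis using that[of "a + h"] \<open>0 < h\<close> by simp
qed

end

section \<open>Solutions with positive mass\<close>

lemma fluid_solution_subset:
  "fluid_solution rho m P I \<Longrightarrow> J \<subseteq> I \<Longrightarrow> fluid_solution rho m P J"
  by (auto simp: fluid_solution_def)

locale positive_mass_solution = asympt_polytropic_eos +
  fixes m P :: "real \<Rightarrow> real" and r1 :: real and R :: ereal
  assumes solution: "fluid_solution rho m P {r. r1 \<le> r \<and> ereal r < R}"
    and r1_below: "ereal r1 < R"
    and initial_mass_pos: "m r1 > 0"
begin

lemma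
  assumes "r1 \<le> r" "ereal r < R"
  shows radius_pos: "r > 0"
    and pressure_pos: "P r > 0"
    and mass_has_derivative: "(m has_real_derivative 4 * pi * r\<^sup>2 * rho (P r)) (at r)"
    and pressure_has_derivative: "(P has_real_derivative - (m r * rho (P r) / r\<^sup>2)) (at r)"
  using solution assms by (auto simp: fluid_solution_def)

lemma r1_pos: "r1 > 0"
  using radius_pos[of r1] r1_below by simp

lemma density_pos: "r1 \<le> r \<Longrightarrow> ereal r < R \<Longrightarrow> rho (P r) > 0"
  by (rule rho_pos[OF pressure_pos])

lemma below_R_if_le: "s \<le> t \<Longrightarrow> ereal t < R \<Longrightarrow> ereal s < R"
  using order.strict_trans1[of "ereal s" "ereal t" R] by simp

lemma mass_mono:
  assumes "r1 \<le> s" "s \<le> t" "ereal t < R"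
  shows "m s \<le> m t"
proof (rule mono_by_derivative[OF \<open>s \<le> t\<close>])
  fix x assume "s \<le> x" "x \<le> t"
  then have x: "r1 \<le> x" "ereal x < R" using assms below_R_if_le[of x t] by auto
  show "(m has_real_derivative 4 * pi * x\<^sup>2 * rho (P x)) (at x)" using mass_has_derivative[OF x] .
  show "0 \<le> 4 * pi * x\<^sup>2 * rho (P x)" using density_pos[OF x] by simp
qed

lemma mass_pos: "r1 \<le> r \<Longrightarrow> ereal r < R \<Longrightarrow> m r > 0"
  using mass_mono[of r1 r] initial_mass_pos by simp

lemma pressure_antimono:
  assumes "r1 \<le> s" "s \<le> t" "ereal t < R"
  shows "P t \<le> P s"
proof (rule antimono_by_derivative[OF \<open>s \<le> t\<close>])
  fix x assume "s \<le> x" "x \<le> t"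
  then have x: "r1 \<le> x" "ereal x < R" using assms below_R_if_le[of x t] by auto
  show "(P has_real_derivative - (m x * rho (P x) / x\<^sup>2)) (at x)" using pressure_has_derivative[OF x] .
  show "- (m x * rho (P x) / x\<^sup>2) \<le> 0" using density_pos[OF x] mass_pos[OF x] by simp
qed

lemma eta_pressure_has_derivative:
  assumes "r1 \<le> r" "ereal r < R"
  shows "((\<lambda>r. eta (P r)) has_real_derivative - (m r / r\<^sup>2)) (at r)"
proof -
  have "((\<lambda>r. eta (P r)) has_real_derivative (1 / rho (P r)) * - (m r * rho (P r) / r\<^sup>2)) (at r)"
    using assms by (intro DERIV_chain2[OF eta_has_derivative pressure_has_derivative] pressure_pos)
  then show ?thesis using density_pos[OF assms] by simp
qed

lemma eta_pressure_pos: "r1 \<le> r \<Longrightarrow> ereal r < R \<Longrightarrow> eta (P r) > 0"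
  using eta_pos pressure_pos by blast

lemma eta_pressure_antimono:
  assumes "r1 \<le> s" "s \<le> t" "ereal t < R"
  shows "eta (P t) \<le> eta (P s)"
  using assms pressure_antimono pressure_pos[of t] below_R_if_le[of s t] by (intro eta_mono) auto

lemma mass_bounded_at_finite_radius:
  assumes "R = ereal a" "r1 \<le> r" "r < a"
  shows "m r \<le> m r1 + 4 * pi * a\<^sup>2 * rho (P r1) * a"
proof -
  define D where "D = 4 * pi * a\<^sup>2 * rho (P r1)"
  have "m r - D * r \<le> m r1 - D * r1"
  proof (rule antimono_by_derivative[OF \<open>r1 \<le> r\<close>])
    fix x assume x: "r1 \<le> x" "x \<le> r"
    then have "x > 0" "ereal x < R" using radius_pos assms by auto
    then show "((\<lambda>r. m r - D * r) has_real_derivative 4 * pi * x\<^sup>2 * rho (P x) - D) (at x)"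
      using x by (auto intro!: derivative_eq_intros mass_has_derivative)
    have "x\<^sup>2 \<le> a\<^sup>2" using x assms \<open>x > 0\<close> by (intro power_mono) auto
    moreover have "rho (P x) \<le> rho (P r1)"
      using x pressure_pos \<open>ereal x < R\<close> pressure_antimono by (intro rho_mono) auto
    ultimately have "x\<^sup>2 * rho (P x) \<le> a\<^sup>2 * rho (P r1)"
      using density_pos[OF x(1) \<open>ereal x < R\<close>] by (intro mult_mono) auto
    then show "4 * pi * x\<^sup>2 * rho (P x) - D \<le> 0" by (simp add: D_def)
  qed
  moreover have "D * (r - r1) \<le> D * a"
    using density_pos[of r1] r1_below r1_pos assms by (intro mult_left_mono) (auto simp: D_def)
  ultimately show ?thesis by (simp add: D_def algebra_simps)
qed

lemma mass_converges_at_finite_radius: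
  assumes "R = ereal a"
  shows "\<exists>M. (m \<longlongrightarrow> M) (at_left a)"
proof (rule mono_bounded_tendsto_at_left)
  show "r1 < a" using r1_below assms by simp
  show "m x \<le> m y" if "r1 \<le> x" "x \<le> y" "y < a" for x y
    using that assms by (intro mass_mono) auto
  show "m x \<le> m r1 + 4 * pi * a\<^sup>2 * rho (P r1) * a" if "r1 \<le> x" "x < a" for x
    using mass_bounded_at_finite_radius[OF assms that] .
qed

lemma pressure_converges_at_finite_radius:
  assumes "R = ereal a"
  obtains L where "(P \<longlongrightarrow> L) (at_left a)" "0 \<le> L"
proof -
  have "r1 < a" using r1_below assms by simp
  have pos: "0 \<le> P r" if "r1 \<le> r" "r < a" for r
    using pressure_pos[of r] that assms by simp
  have "\<exists>L. ((\<lambda>r. - P r) \<longlongrightarrow> L) (at_left a)"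
  proof (rule mono_bounded_tendsto_at_left[OF \<open>r1 < a\<close>])
    show "- P x \<le> - P y" if "r1 \<le> x" "x \<le> y" "y < a" for x y
      using pressure_antimono[of x y] that assms by simp
    show "- P x \<le> 0" if "r1 \<le> x" "x < a" for x
      using pos[OF that] by simp
  qed
  then obtain L where L: "(P \<longlongrightarrow> L) (at_left a)" using tendsto_minus_cancel_left by blast
  moreover have "\<forall>\<^sub>F r in at_left a. 0 \<le> P r"
    using eventually_at_left_real[OF \<open>r1 < a\<close>] by eventually_elim (simp add: pos)
  ultimately show thesis using that tendsto_lowerbound[OF L] by simp
qed

end

subsection \<open>Infinite radius\<close>

locale unbounded_positive_mass_solution = positive_mass_solution +
  assumes unbounded: "R = \<infinity>"
begin

lemma in_domain [simp]: "ereal r < R"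
  by (simp add: unbounded)

lemma mass_lower_bound_if_density_ge:
  assumes "\<And>r. r1 \<le> r \<Longrightarrow> c \<le> rho (P r)" "r1 \<le> r"
  shows "4 * pi * c / 3 * (r ^ 3 - r1 ^ 3) \<le> m r"
proof -
  have "m r1 - 4 * pi * c / 3 * r1 ^ 3 \<le> m r - 4 * pi * c / 3 * r ^ 3"
  proof (rule mono_by_derivative[OF \<open>r1 \<le> r\<close>])
    fix x assume "r1 \<le> x"
    then show "((\<lambda>r. m r - 4 * pi * c / 3 * r ^ 3) has_real_derivative
        4 * pi * x\<^sup>2 * rho (P x) - 4 * pi * c * x\<^sup>2) (at x)"
      by (auto intro!: derivative_eq_intros mass_has_derivative simp: power2_eq_square)
    have "4 * pi * x\<^sup>2 * c \<le> 4 * pi * x\<^sup>2 * rho (P x)"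
      using assms(1)[OF \<open>r1 \<le> x\<close>] by (intro mult_left_mono) auto
    then show "0 \<le> 4 * pi * x\<^sup>2 * rho (P x) - 4 * pi * c * x\<^sup>2" by (simp add: algebra_simps)
  qed
  then show ?thesis using initial_mass_pos by (simp add: algebra_simps)
qed

lemma eta_pressure_gets_small:
  assumes "\<epsilon> > 0"
  obtains r where "r1 \<le> r" "eta (P r) < \<epsilon>"
proof -
  have "\<exists>r\<ge>r1. eta (P r) < \<epsilon>"
  proof (rule ccontr)
  assume "\<not> ?thesis"
  then have large: "\<epsilon> \<le> eta (P r)" if "r1 \<le> r" for r using that by (meson not_less)
  define c where "c = rho_eta \<epsilon>"
  have "c > 0" using rho_of_eta_pos[OF assms] by (simp add: c_def)
  have density: "c \<le> rho (P r)" if "r1 \<le> r" for r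
    using rho_of_eta_mono[OF assms large[OF that]] rho_eq_rho_of_eta[OF pressure_pos[OF that in_domain]]
    by (simp add: c_def)
  define f where "f r = eta (P r) + 2 * pi * c / 3 * r\<^sup>2 + 4 * pi * c / 3 * r1 ^ 3 / r" for r
  have f_le: "f r \<le> f r1" if "r1 \<le> r" for r
  proof (rule antimono_by_derivative[OF that])
    fix x assume "r1 \<le> x"
    have "x > 0" using radius_pos[OF \<open>r1 \<le> x\<close> in_domain] .
    show "(f has_real_derivative - (m x / x\<^sup>2) + 4 * pi * c / 3 * x
        - 4 * pi * c / 3 * r1 ^ 3 / x\<^sup>2) (at x)"
      unfolding f_def using \<open>x > 0\<close> \<open>r1 \<le> x\<close>
      by (auto intro!: derivative_eq_intros eta_pressure_has_derivative simp: power2_eq_square)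
    have "- (m x / x\<^sup>2) + 4 * pi * c / 3 * x - 4 * pi * c / 3 * r1 ^ 3 / x\<^sup>2
        = (4 * pi * c / 3 * (x ^ 3 - r1 ^ 3) - m x) / x\<^sup>2"
      using \<open>x > 0\<close> by (simp add: field_simps power2_eq_square power3_eq_cube)
    also have "\<dots> \<le> 0"
      using mass_lower_bound_if_density_ge[OF density \<open>r1 \<le> x\<close>] by (simp add: divide_nonpos_nonneg)
    finally show "- (m x / x\<^sup>2) + 4 * pi * c / 3 * x - 4 * pi * c / 3 * r1 ^ 3 / x\<^sup>2 \<le> 0" .
  qed
  have f_gt: "2 * pi * c / 3 * r\<^sup>2 < f r" if "r1 \<le> r" for r
  proof -
    have "0 \<le> 4 * pi * c / 3 * r1 ^ 3 / r"
      using radius_pos[OF that in_domain] r1_pos \<open>c > 0\<close> by simp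
    then show ?thesis using eta_pressure_pos[OF that in_domain] unfolding f_def by linarith
  qed
  have "filterlim (\<lambda>r. 2 * pi * c / 3 * r\<^sup>2) at_top at_top"
    using \<open>c > 0\<close> by (intro filterlim_tendsto_pos_mult_at_top[OF tendsto_const]
        filterlim_pow_at_top filterlim_ident) auto
  then obtain r where "r1 \<le> r" "f r1 < 2 * pi * c / 3 * r\<^sup>2"
    by (rule filterlim_at_top_ex_gt)
  then show False using f_le f_gt by force
  qed
  then show thesis using that by blast
qed

lemma mass_over_radius_le_eta_pressure:
  assumes "r1 \<le> r"
  shows "m r / r \<le> eta (P r)"
proof (rule ccontr)
  assume "\<not> m r / r \<le> eta (P r)"
  define \<delta> where "\<delta> = m r / r - eta (P r)"
  define s where "s = r + m r / \<delta>"
  have "\<delta> > 0" "r > 0" "m r > 0"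
    using \<open>\<not> m r / r \<le> eta (P r)\<close> radius_pos mass_pos assms by (auto simp: \<delta>_def)
  then have "r \<le> s" "m r < \<delta> * s" by (auto simp: s_def algebra_simps)
  then have "m r / s < \<delta>" using \<open>r > 0\<close> by (simp add: divide_less_eq mult.commute)
  have "eta (P s) - m r / s \<le> eta (P r) - m r / r"
  proof (rule antimono_by_derivative[OF \<open>r \<le> s\<close>])
    fix x assume "r \<le> x"
    then have "r1 \<le> x" "x > 0" using assms \<open>r > 0\<close> by auto
    then show "((\<lambda>x. eta (P x) - m r / x) has_real_derivative - (m x / x\<^sup>2) + m r / x\<^sup>2) (at x)"
      by (auto intro!: derivative_eq_intros eta_pressure_has_derivative simp: power2_eq_square)
    show "- (m x / x\<^sup>2) + m r / x\<^sup>2 \<le> 0"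
      using mass_mono[OF assms \<open>r \<le> x\<close> in_domain] by (simp add: divide_right_mono)
  qed
  then show False
    using eta_pressure_pos[of s] assms \<open>r \<le> s\<close> \<open>m r / s < \<delta>\<close> by (simp add: \<delta>_def)
qed

lemma density_lower_bound:
  assumes "n0 \<le> 3"
  obtains c r2 where "c > 0" "r1 \<le> r2" "\<And>r. r2 \<le> r \<Longrightarrow> c * (m r / r) ^ 3 \<le> rho (P r)"
proof -
  obtain c e0 where "c > 0" "e0 > 0" and cubic: "\<And>e. 0 < e \<Longrightarrow> e \<le> e0 \<Longrightarrow> c * e ^ 3 \<le> rho_eta e"
    using rho_of_eta_cubic_lower_bound[OF assms] by blast
  obtain r2 where "r1 \<le> r2" "eta (P r2) < e0"
    using eta_pressure_gets_small[OF \<open>e0 > 0\<close>] .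
  have "c * (m r / r) ^ 3 \<le> rho (P r)" if "r2 \<le> r" for r
  proof -
    have r: "r1 \<le> r" "r > 0" using \<open>r1 \<le> r2\<close> that radius_pos by auto
    have "c * (m r / r) ^ 3 \<le> c * eta (P r) ^ 3"
      using mass_over_radius_le_eta_pressure[OF r(1)] mass_pos[OF r(1)] r(2) \<open>c > 0\<close>
      by (intro mult_left_mono power_mono) auto
    also have "\<dots> \<le> rho_eta (eta (P r))"
      using eta_pressure_antimono[OF \<open>r1 \<le> r2\<close> that in_domain] \<open>eta (P r2) < e0\<close>
      by (intro cubic eta_pressure_pos r(1) in_domain) simp
    also have "\<dots> = rho (P r)"
      using rho_eq_rho_of_eta[OF pressure_pos[OF r(1) in_domain]] by simp
    finally show ?thesis .
  qed
  then show thesis using that \<open>c > 0\<close> \<open>r1 \<le> r2\<close> by blast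
qed

theorem unbounded_radius_impossible:
  assumes "n0 \<le> 3"
  shows False
proof -
  obtain c r2 where "c > 0" "r1 \<le> r2" and density: "\<And>r. r2 \<le> r \<Longrightarrow> c * (m r / r) ^ 3 \<le> rho (P r)"
    using density_lower_bound[OF assms] by blast
  define k where "k r = inverse (m r ^ 2) + 8 * pi * c * ln r" for r
  have k_le: "k r \<le> k r2" if "r2 \<le> r" for r
  proof (rule antimono_by_derivative[OF that])
    fix x assume "r2 \<le> x"
    then have x: "r1 \<le> x" "x > 0" "m x > 0"
      using \<open>r1 \<le> r2\<close> radius_pos mass_pos by auto
    show "(k has_real_derivative 8 * pi * c / x - 2 * (4 * pi * x\<^sup>2 * rho (P x)) / m x ^ 3) (at x)"
      unfolding k_def using x
      by (auto intro!: derivative_eq_intros mass_has_derivative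
          simp: field_simps power2_eq_square power3_eq_cube)
    have "8 * pi * c / x = 2 * (4 * pi * x\<^sup>2 * (c * (m x / x) ^ 3)) / m x ^ 3"
      using x by (simp add: field_simps power2_eq_square power3_eq_cube)
    also have "\<dots> \<le> 2 * (4 * pi * x\<^sup>2 * rho (P x)) / m x ^ 3"
      using density[OF \<open>r2 \<le> x\<close>] x by (intro divide_right_mono mult_left_mono) auto
    finally show "8 * pi * c / x - 2 * (4 * pi * x\<^sup>2 * rho (P x)) / m x ^ 3 \<le> 0" by simp
  qed
  have "filterlim (\<lambda>r. 8 * pi * c * ln r) at_top at_top"
    using \<open>c > 0\<close> by (intro filterlim_tendsto_pos_mult_at_top[OF tendsto_const] ln_at_top) auto
  then obtain r where "r2 \<le> r" "k r2 < 8 * pi * c * ln r"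
    by (rule filterlim_at_top_ex_gt)
  moreover have "0 < inverse (m r ^ 2)"
    using mass_pos[of r] \<open>r1 \<le> r2\<close> \<open>r2 \<le> r\<close> by simp
  ultimately show False using k_le[of r] unfolding k_def by linarith
qed

end

context positive_mass_solution
begin

lemma radius_finite:
  assumes "n0 \<le> 3"
  shows "R < \<infinity>"
proof (rule ccontr)
  assume "\<not> R < \<infinity>"
  then interpret unbounded_positive_mass_solution rho n0 n1 a0 a1 m P r1 R
    by unfold_locales simp
  show False by (rule unbounded_radius_impossible[OF assms])
qed

lemma pressure_tendsto_0_if_maximal:
  assumes "maximal_fluid_solution rho m P r0 R" "r0 < r1" "R = ereal a"
  shows "(P \<longlongrightarrow> 0) (at_left a)"
proof -
  obtain M where lim_m: "(m \<longlongrightarrow> M) (at_left a)"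
    using mass_converges_at_finite_radius[OF assms(3)] by blast
  obtain L where lim_P: "(P \<longlongrightarrow> L) (at_left a)" and "0 \<le> L"
    using pressure_converges_at_finite_radius[OF assms(3)] by blast
  have "L = 0"
  proof (rule ccontr)
    assume "L \<noteq> 0"
    have "r0 < a" "0 < L" using assms r1_below \<open>0 \<le> L\<close> \<open>L \<noteq> 0\<close> by auto
    have "fluid_solution rho m P {r. r0 < r \<and> r < a}"
      using assms unfolding maximal_fluid_solution_def by simp
    then obtain b m' P' where "a < b" "fluid_solution rho m' P' {r. r0 < r \<and> r < b}"
      and "\<And>r. r < a \<Longrightarrow> m' r = m r \<and> P' r = P r"
      by (rule fluid_solution_extension[OF _ \<open>r0 < a\<close> lim_m lim_P \<open>0 < L\<close>]) blast
    then have "\<exists>m' P' R'. R' > R \<and> fluid_solution rho m' P' {r. r0 < r \<and> ereal r < R'} \<and>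
        (\<forall>r. r0 < r \<and> ereal r < R \<longrightarrow> m' r = m r \<and> P' r = P r)"
      using assms(3) by (intro exI[of _ m'] exI[of _ P'] exI[of _ "ereal b"]) simp
    with assms(1) show False unfolding maximal_fluid_solution_def by blast
  qed
  then show ?thesis using lim_P by simp
qed

end

lemma (in asympt_polytropic_eos) positive_mass_solution_if_maximal:
  assumes "maximal_fluid_solution rho m P r0 R" "r0 < r1" "ereal r1 < R" "m r1 > 0"
  shows "positive_mass_solution rho n0 n1 a0 a1 m P r1 R"
proof
  show "fluid_solution rho m P {r. r1 \<le> r \<and> ereal r < R}"
    using assms(1,2) unfolding maximal_fluid_solution_def
    by (auto elim: fluid_solution_subset)
qed (use assms in simp_all)

theorem theorem2:
  fixes rho m P :: "real \<Rightarrow> real" and n0 n1 a0 a1 r0 :: real and R :: ereal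
  assumes "asympt_polytropic rho n0 n1 a0 a1"
    and "n0 \<le> 3"
    and "maximal_fluid_solution rho m P r0 R"
    and "\<exists>r. r0 < r \<and> ereal r < R \<and> m r > 0"
  shows "R < \<infinity> \<and> (P \<longlongrightarrow> 0) (at_left (real_of_ereal R)) \<and>
         (\<exists>M. (m \<longlongrightarrow> M) (at_left (real_of_ereal R)))"
proof -
  interpret asympt_polytropic_eos rho n0 n1 a0 a1 by unfold_locales (rule assms(1))
  obtain r1 where "r0 < r1" "ereal r1 < R" "m r1 > 0" using assms(4) by blast
  then interpret positive_mass_solution rho n0 n1 a0 a1 m P r1 R
    by (rule positive_mass_solution_if_maximal[OF assms(3)])
  have "R < \<infinity>" by (rule radius_finite[OF assms(2)])
  then obtain a where "R = ereal a" using \<open>ereal r1 < R\<close> by (cases R) auto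
  then show ?thesis
    using pressure_tendsto_0_if_maximal[OF assms(3) \<open>r0 < r1\<close>] mass_converges_at_finite_radius
    by simp
qed

end
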